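(* Let $r>0$ and let $f$ be analytic on an open neighbourhood of the closed half-disc $D_r:=\overline{B}_r(0)\cap\overline{\mathbb C}_+$. Let $Y,\eta$ be parameters with $0<\eta<Y<r$, and let $\alpha,\beta\in(0,1)$ satisfy $$\beta\Big(\frac{1-\alpha}{\alpha+\beta}\Big)^2>\frac{Y}{\eta}.$$ Let $N(\alpha r)$ be the number of zeros of $f$, counted with multiplicity, in $D_{\alpha r,\eta,Y}:=\{z\in\mathbb C:\eta\le\operatorname{Im}z\le Y,\ |z|\le\alpha r\}$. Then, if $f(i\beta r)\ne0$, $$N(\alpha r)\le\frac{2}{\log\Lambda(r)}\log\Big(\frac{1}{\min\{\beta,1-\beta\}}\frac{\sup_{z\in\partial D_r}|f(z)|}{|f(i\beta r)|}\Big),\qquad \Lambda(r):=\frac{1+\frac{4\beta\eta}{(\alpha+\beta)^2}\frac1r}{1+\frac{4Y}{(1-\alpha)^2}\frac1r},$$ and $\Lambda(r)>1$.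
   Context: $\overline{B}_r(0)$ is the closed disc of radius $r$ centered at $0$; $\overline{\mathbb C}_+=\{\operatorname{Im}z\ge0\}$; $\partial D_r$ is the boundary of the half-disc $D_r$ (the segment $[-r,r]$ together with the upper semicircle of radius $r$). *)

theory Defs
  imports "HOL-Complex_Analysis.Complex_Analysis"
begin

definition half_disc :: "real \<Rightarrow> complex set" where
  "half_disc r = cball 0 r \<inter> {z. Im z \<ge> 0}"

definition strip_region :: "real \<Rightarrow> real \<Rightarrow> real \<Rightarrow> complex set" where
  "strip_region s \<eta> Y = {z. \<eta> \<le> Im z \<and> Im z \<le> Y \<and> norm z \<le> s}"

definition zero_count :: "(complex \<Rightarrow> complex) \<Rightarrow> complex set \<Rightarrow> int" where
  "zero_count f A = (\<Sum>z\<in>{z\<in>A. f z = 0}. zorder f z)"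

definition Lambda :: "real \<Rightarrow> real \<Rightarrow> real \<Rightarrow> real \<Rightarrow> real \<Rightarrow> real" where
  "Lambda \<alpha> \<beta> \<eta> Y r =
     (1 + 4 * \<beta> * \<eta> / (\<alpha> + \<beta>)^2 * (1 / r)) / (1 + 4 * Y / (1 - \<alpha>)^2 * (1 / r))"

end

theory Submission
  imports Defs
begin

text \<open>Put p = i \<beta> r. For a zero z of f in the open half-disc, the factor
  B_z(w) = (w - z)(r^2 - z w) / ((w - cnj z)(r^2 - cnj z w)) is analytic on the closed half-disc,
  vanishes only at z and has modulus one on its boundary. Dividing f by the product of these
  factors, taken with multiplicities, removes its zeros without changing |f| on the boundary, so the
  maximum modulus principle gives |f p| \<le> sup |f| * \<Prod> |B_z p|^m_z. For z in the strip region an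
  elementary estimate gives |B_z p|^2 \<le> 1 / \<Lambda>(r), hence |f p|^2 \<Lambda>(r)^N \<le> (sup |f|)^2,
  which is the bound after taking logarithms (the factor 1 / min \<beta> (1 - \<beta>) \<ge> 1 only weakens it).\<close>

lemma remove_sings_analytic_at_eventually_eq:
  assumes "eventually (\<lambda>w. h w = k w) (at z)" and "k analytic_on {z}"
  shows "remove_sings h analytic_on {z}"
proof (rule remove_sings_analytic_at)
  show "isolated_singularity_at h z"
    using isolated_singularity_at_cong[OF assms(1) refl] isolated_singularity_at_analytic[OF assms(2)]
    by blast
  have "k \<midarrow>z\<rightarrow> k z"
    using analytic_at_imp_isCont[OF assms(2)] by (simp add: isCont_def)
  then show "h \<midarrow>z\<rightarrow> k z"
    using tendsto_cong[OF assms(1)] by blast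
qed

lemma remove_sings_divide_zorder_power_analytic_at:
  fixes f Q :: "complex \<Rightarrow> complex"
  assumes "f holomorphic_on T" "open T" "connected T" "z \<in> T" "\<exists>w\<in>T. f w \<noteq> 0"
    and "Q analytic_on {z}" "Q z \<noteq> 0"
  shows "remove_sings (\<lambda>w. f w / ((w - z) ^ nat (zorder f z) * Q w)) analytic_on {z}"
proof -
  define F where "F = zor_poly f z"
  obtain \<rho> where \<rho>: "\<rho> > 0" "F holomorphic_on cball z \<rho>"
    "\<And>w. w \<in> cball z \<rho> \<Longrightarrow> f w = F w * (w - z) ^ nat (zorder f z)"
    using zorder_exist_zero[OF assms(1-5)] unfolding F_def by blast
  have "eventually (\<lambda>w. w \<in> ball z \<rho> \<and> w \<noteq> z) (at z)"
    using eventually_at_ball'[OF \<rho>(1), of z UNIV] by simp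
  then have "eventually (\<lambda>w. f w / ((w - z) ^ nat (zorder f z) * Q w) = F w / Q w) (at z)"
    by eventually_elim (use \<rho>(3) in auto)
  moreover have "F analytic_on {z}"
    using holomorphic_on_imp_analytic_at[OF holomorphic_on_subset[OF \<rho>(2) ball_subset_cball]] \<rho>(1)
    by auto
  then have "(\<lambda>w. F w / Q w) analytic_on {z}"
    using assms(6,7) by (intro analytic_intros) auto
  ultimately show ?thesis
    by (rule remove_sings_analytic_at_eventually_eq)
qed

lemma analytic_on_remove_sings_divide_zero_factors:
  fixes f :: "complex \<Rightarrow> complex" and C :: "complex \<Rightarrow> complex \<Rightarrow> complex"
  assumes f: "f holomorphic_on T" "open T" "connected T" "H \<subseteq> T" "\<exists>w\<in>T. f w \<noteq> 0"
    and Z: "finite Z" "Z \<subseteq> H"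
    and C: "\<And>z. z \<in> Z \<Longrightarrow> C z analytic_on H"
      "\<And>z w. z \<in> Z \<Longrightarrow> w \<in> H \<Longrightarrow> C z w \<noteq> 0"
  shows "remove_sings (\<lambda>w. f w / (\<Prod>z\<in>Z. ((w - z) * C z w) ^ nat (zorder f z))) analytic_on H"
proof (rule analytic_on_analytic_at[THEN iffD2], intro ballI)
  fix w assume "w \<in> H"
  define m where "m z = nat (zorder f z)" for z
  have C_at: "C z analytic_on {w}" if "z \<in> Z" for z
    using C(1)[OF that] \<open>w \<in> H\<close> analytic_on_subset by blast
  have factor_nz: "(w - z) * C z w \<noteq> 0" if "z \<in> Z" "z \<noteq> w" for z
    using C(2)[OF that(1) \<open>w \<in> H\<close>] that(2) by simp
  show "remove_sings (\<lambda>w. f w / (\<Prod>z\<in>Z. ((w - z) * C z w) ^ m z)) analytic_on {w}"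
  proof (cases "w \<in> Z")
    case False
    have "f analytic_on {w}"
      using holomorphic_on_imp_analytic_at[OF f(1,2)] \<open>w \<in> H\<close> f(4) by blast
    moreover have "(\<lambda>v. \<Prod>z\<in>Z. ((v - z) * C z v) ^ m z) analytic_on {w}"
      using C_at by (intro analytic_intros) auto
    moreover have "(\<Prod>z\<in>Z. ((w - z) * C z w) ^ m z) \<noteq> 0"
      using factor_nz False Z(1) by (subst prod_zero_iff) auto
    ultimately show ?thesis
      by (intro remove_sings_analytic_on analytic_on_divide) auto
  next
    case True
    define Q where "Q v = C w v ^ m w * (\<Prod>z\<in>Z-{w}. ((v - z) * C z v) ^ m z)" for v
    have "(\<Prod>z\<in>Z. ((v - z) * C z v) ^ m z) = (v - w) ^ m w * Q v" for v
      unfolding prod.remove[OF Z(1) True] Q_def by (simp add: power_mult_distrib mult.assoc)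
    moreover have "remove_sings (\<lambda>v. f v / ((v - w) ^ m w * Q v)) analytic_on {w}"
      unfolding m_def
    proof (rule remove_sings_divide_zorder_power_analytic_at[OF f(1-3) _ f(5)])
      show "w \<in> T" using \<open>w \<in> H\<close> f(4) by blast
      show "Q analytic_on {w}"
        unfolding Q_def using C_at True by (intro analytic_intros) auto
      have "(\<Prod>z\<in>Z-{w}. ((w - z) * C z w) ^ m z) \<noteq> 0"
        using factor_nz Z(1) by (subst prod_zero_iff) auto
      then show "Q w \<noteq> 0"
        unfolding Q_def using C(2)[OF True \<open>w \<in> H\<close>] by simp
    qed
    ultimately show ?thesis by simp
  qed
qed

lemma norm_le_Sup_frontier_mult_prod_zero_factors:
  fixes f :: "complex \<Rightarrow> complex" and C :: "complex \<Rightarrow> complex \<Rightarrow> complex"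
  assumes f: "f holomorphic_on T" "open T" "connected T" "H \<subseteq> T"
    and H: "compact H" "p \<in> H" "f p \<noteq> 0"
    and Z: "finite Z" "Z \<subseteq> interior H" "\<And>z. z \<in> Z \<Longrightarrow> f z = 0"
    and C: "\<And>z. z \<in> Z \<Longrightarrow> C z analytic_on H"
      "\<And>z w. z \<in> Z \<Longrightarrow> w \<in> H \<Longrightarrow> C z w \<noteq> 0"
      "\<And>z w. z \<in> Z \<Longrightarrow> w \<in> frontier H \<Longrightarrow> norm ((w - z) * C z w) = 1"
  shows "norm (f p) \<le> Sup ((\<lambda>w. norm (f w)) ` frontier H) *
           (\<Prod>z\<in>Z. norm ((p - z) * C z p) ^ nat (zorder f z))"
proof -
  define M where "M = Sup ((\<lambda>w. norm (f w)) ` frontier H)"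
  define P where "P w = (\<Prod>z\<in>Z. ((w - z) * C z w) ^ nat (zorder f z))" for w
  define g where "g = remove_sings (\<lambda>w. f w / P w)"
  have "Z \<subseteq> H" using Z(2) interior_subset by blast
  have g: "g analytic_on H"
    unfolding g_def P_def
  proof (rule analytic_on_remove_sings_divide_zero_factors[OF f _ Z(1) \<open>Z \<subseteq> H\<close>])
    show "\<exists>w\<in>T. f w \<noteq> 0" using H(2,3) f(4) by blast
  qed (use C in auto)
  have g_eq: "g w = f w / P w" and P_nz: "P w \<noteq> 0" if "w \<in> H" "w \<notin> Z" for w
  proof -
    show "P w \<noteq> 0"
      unfolding P_def using that C(2) Z(1) by (auto simp: prod_zero_iff)
    have "f analytic_on {w}"
      using holomorphic_on_imp_analytic_at[OF f(1,2)] that f(4) by blast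
    moreover have "P analytic_on {w}"
      unfolding P_def using that C(1) analytic_on_subset by (intro analytic_intros) blast
    ultimately show "g w = f w / P w"
      unfolding g_def using \<open>P w \<noteq> 0\<close> by (intro remove_sings_at_analytic analytic_intros) auto
  qed
  have frontier: "w \<in> H" "w \<notin> Z" if "w \<in> frontier H" for w
    using that Z(2) compact_imp_closed[OF H(1)] by (auto simp: frontier_def)
  have "bdd_above ((\<lambda>w. norm (f w)) ` frontier H)"
  proof (intro bounded_imp_bdd_above compact_imp_bounded compact_continuous_image)
    show "continuous_on (frontier H) (\<lambda>w. norm (f w))"
      using frontier(1) f(4)
      by (intro continuous_intros continuous_on_subset[OF holomorphic_on_imp_continuous_on[OF f(1)]])
        blast
    show "compact (frontier H)"
      using H(1) by (simp add: compact_frontier)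
  qed
  then have "norm (g w) \<le> M" if "w \<in> frontier H" for w
  proof -
    have "norm (P w) = 1"
      unfolding P_def prod_norm[symmetric] norm_power using C(3) that by simp
    then have "norm (g w) = norm (f w)"
      using g_eq frontier that by (simp add: norm_divide)
    also have "\<dots> \<le> M"
      unfolding M_def using \<open>bdd_above _\<close> that by (intro cSup_upper) auto
    finally show ?thesis .
  qed
  then have "norm (g p) \<le> M"
  proof (rule maximum_modulus_frontier[of g H, rotated 3])
    show "g holomorphic_on interior H"
      using analytic_imp_holomorphic[OF g] interior_subset by (rule holomorphic_on_subset)
    show "continuous_on (closure H) g"
      using analytic_imp_holomorphic[OF g] compact_imp_closed[OF H(1)]
      by (simp add: closure_closed holomorphic_on_imp_continuous_on)
  qed (use H in \<open>simp_all add: compact_imp_bounded\<close>)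
  moreover have "p \<notin> Z" using Z(3) H(3) by blast
  ultimately have "norm (f p) / norm (P p) \<le> M"
    using g_eq H(2) by (simp add: norm_divide)
  moreover have "norm (P p) > 0"
    using P_nz[OF H(2) \<open>p \<notin> Z\<close>] by simp
  ultimately have "norm (f p) \<le> M * norm (P p)"
    by (simp add: pos_divide_le_eq)
  then show ?thesis
    unfolding M_def P_def prod_norm[symmetric] norm_power .
qed

lemma compact_half_disc: "compact (half_disc r)"
  unfolding half_disc_def
  by (intro compact_Int_closed compact_cball closed_halfspace_Im_ge)

lemma upper_half_ball_subset_interior_half_disc: "ball 0 r \<inter> {z. Im z > 0} \<subseteq> interior (half_disc r)"
proof (rule interior_maximal)
  show "ball 0 r \<inter> {z. Im z > 0} \<subseteq> half_disc r"
    by (auto simp: half_disc_def)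
qed (intro open_Int open_ball open_halfspace_Im_gt)

lemma frontier_half_disc_subset: "frontier (half_disc r) \<subseteq> {w \<in> half_disc r. Im w = 0 \<or> norm w = r}"
proof
  fix w assume w: "w \<in> frontier (half_disc r)"
  then have "w \<in> half_disc r"
    using compact_imp_closed[OF compact_half_disc] by (simp add: frontier_def closure_closed)
  moreover have "w \<notin> ball 0 r \<inter> {z. Im z > 0}"
    using w upper_half_ball_subset_interior_half_disc[of r] unfolding frontier_def by blast
  ultimately show "w \<in> {w \<in> half_disc r. Im w = 0 \<or> norm w = r}"
    by (auto simp: half_disc_def)
qed

text \<open>The Blaschke factor (w - z)/(w - cnj z) of the upper half-plane, corrected by
  (r^2 - z w)/(r^2 - cnj z w) so that it also has modulus one on the circle |w| = r.\<close>
definition half_disc_blaschke :: "real \<Rightarrow> complex \<Rightarrow> complex \<Rightarrow> complex" where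
  "half_disc_blaschke r z w =
     (w - z) * (of_real (r^2) - z * w) / ((w - cnj z) * (of_real (r^2) - cnj z * w))"

lemma norm_half_disc_blaschke:
  "norm (half_disc_blaschke r z w) =
     norm (w - z) * norm (of_real (r^2) - z * w) /
     (norm (w - cnj z) * norm (of_real (r^2) - cnj z * w))"
  unfolding half_disc_blaschke_def by (simp add: norm_mult norm_divide)

lemma half_disc_blaschke_denominators_nonzero:
  assumes "Im z > 0" "norm z < r" "w \<in> half_disc r"
  shows "w - cnj z \<noteq> 0" "of_real (r^2) - z * w \<noteq> 0" "of_real (r^2) - cnj z * w \<noteq> 0"
proof -
  have w: "Im w \<ge> 0" "norm w \<le> r" using assms(3) by (auto simp: half_disc_def)
  show "w - cnj z \<noteq> 0"
    using assms(1) w(1) by (auto simp: complex_eq_iff)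
  have "norm z * norm w < r * r"
    using assms(2) w(2) by (smt (verit, best) mult_left_mono mult_strict_right_mono norm_ge_zero)
  then have "norm (z * w) < norm (of_real (r^2) :: complex)"
    "norm (cnj z * w) < norm (of_real (r^2) :: complex)"
    by (simp_all add: norm_mult power2_eq_square)
  then show "of_real (r^2) - z * w \<noteq> 0" "of_real (r^2) - cnj z * w \<noteq> 0"
    by (auto simp del: norm_of_real)
qed

lemma norm_half_disc_blaschke_frontier:
  assumes "Im z > 0" "norm z < r" "w \<in> frontier (half_disc r)"
  shows "norm (half_disc_blaschke r z w) = 1"
proof -
  have w: "w \<in> half_disc r" "Im w = 0 \<or> norm w = r"
    using frontier_half_disc_subset assms(3) by auto
  have "w \<noteq> z" using assms(1,2) w(2) by auto
  note nz = half_disc_blaschke_denominators_nonzero[OF assms(1,2) w(1)]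
  from w(2) show ?thesis
  proof
    assume "Im w = 0"
    then have "cnj w = w" by (simp add: complex_eq_iff)
    then have "norm (w - cnj z) = norm (w - z)"
      "norm (of_real (r^2) - cnj z * w) = norm (of_real (r^2) - z * w)"
      by (metis complex_cnj_diff complex_mod_cnj, metis complex_cnj_diff complex_cnj_mult
          complex_cnj_complex_of_real complex_mod_cnj)
    then show ?thesis
      unfolding norm_half_disc_blaschke using nz \<open>w \<noteq> z\<close> by simp
  next
    assume "norm w = r"
    then have r2: "of_real (r^2) = w * cnj w"
      using complex_norm_square[of w] by simp
    have "norm (of_real (r^2) - z * w) = r * norm (w - cnj z)"
    proof -
      have "of_real (r^2) - z * w = w * cnj (w - cnj z)" unfolding r2 by (simp add: algebra_simps)
      then show ?thesis by (simp only: norm_mult complex_mod_cnj \<open>norm w = r\<close>)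
    qed
    moreover have "norm (of_real (r^2) - cnj z * w) = r * norm (w - z)"
    proof -
      have "of_real (r^2) - cnj z * w = w * cnj (w - z)" unfolding r2 by (simp add: algebra_simps)
      then show ?thesis by (simp only: norm_mult complex_mod_cnj \<open>norm w = r\<close>)
    qed
    moreover have "r > 0" using assms(2) by (smt (verit) norm_ge_zero)
    ultimately show ?thesis
      unfolding norm_half_disc_blaschke using nz \<open>w \<noteq> z\<close> by simp
  qed
qed

lemma norm_le_Sup_frontier_half_disc_mult_prod_blaschke:
  fixes f :: "complex \<Rightarrow> complex"
  assumes f: "f holomorphic_on T" "open T" "connected T" "half_disc r \<subseteq> T"
    and p: "p \<in> half_disc r" "f p \<noteq> 0"
    and Z: "finite Z" "\<And>z. z \<in> Z \<Longrightarrow> f z = 0 \<and> Im z > 0 \<and> norm z < r"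
  shows "norm (f p) \<le> Sup ((\<lambda>w. norm (f w)) ` frontier (half_disc r)) *
           (\<Prod>z\<in>Z. norm (half_disc_blaschke r z p) ^ nat (zorder f z))"
proof -
  define C where "C z w = (of_real (r^2) - z * w) / ((w - cnj z) * (of_real (r^2) - cnj z * w))"
    for z w
  have blaschke: "half_disc_blaschke r z w = (w - z) * C z w" for z w
    unfolding half_disc_blaschke_def C_def by simp
  show ?thesis
    unfolding blaschke
  proof (rule norm_le_Sup_frontier_mult_prod_zero_factors[OF f compact_half_disc p Z(1)])
    show "Z \<subseteq> interior (half_disc r)"
      using Z(2) upper_half_ball_subset_interior_half_disc by force
    fix z assume z: "z \<in> Z"
    then have "Im z > 0" "norm z < r" using Z(2) by auto
    note nz = half_disc_blaschke_denominators_nonzero[OF this]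
    show "f z = 0" using Z(2)[OF z] by simp
    show "C z analytic_on half_disc r"
      unfolding C_def using nz by (intro analytic_intros) auto
    show "C z w \<noteq> 0" if "w \<in> half_disc r" for w
      unfolding C_def using nz[OF that] by simp
    show "norm ((w - z) * C z w) = 1" if "w \<in> frontier (half_disc r)" for w
      using norm_half_disc_blaschke_frontier[OF \<open>Im z > 0\<close> \<open>norm z < r\<close> that] blaschke by simp
  qed
qed

lemma norm_imaginary_minus_cnj_sq:
  "norm (\<i> * of_real c - cnj z)^2 = norm (\<i> * of_real c - z)^2 + 4 * c * Im z"
  unfolding cmod_power2 by (simp add: power2_eq_square algebra_simps)

lemma norm_of_real_minus_mult_imaginary_sq:
  "norm (of_real s - z * (\<i> * of_real c))^2 =
     norm (of_real s - cnj z * (\<i> * of_real c))^2 + 4 * s * c * Im z"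
  unfolding cmod_power2 by (simp add: power2_eq_square algebra_simps)

lemma norm_half_disc_blaschke_imaginary_sq:
  fixes r c :: real and z :: complex
  defines "A \<equiv> norm (\<i> * of_real c - z)^2"
    and "C \<equiv> norm (of_real (r^2) - cnj z * (\<i> * of_real c))^2"
    and "k \<equiv> 4 * c * Im z"
  shows "norm (half_disc_blaschke r z (\<i> * of_real c))^2 = A * (C + r^2 * k) / ((A + k) * C)"
  unfolding norm_half_disc_blaschke power_divide power_mult_distrib norm_imaginary_minus_cnj_sq
    norm_of_real_minus_mult_imaginary_sq[of "r^2" z c] assms
  by (simp add: algebra_simps)

lemma norm_imaginary_minus_sq_le:
  assumes "norm z \<le> \<alpha> * r" "0 \<le> \<beta>" "0 \<le> r"
  shows "norm (\<i> * of_real (\<beta> * r) - z)^2 \<le> ((\<alpha> + \<beta>) * r)^2"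
proof -
  have "norm (\<i> * of_real (\<beta> * r) - z) \<le> norm (\<i> * of_real (\<beta> * r)) + norm z"
    by (rule norm_triangle_ineq4)
  also have "\<dots> \<le> (\<alpha> + \<beta>) * r"
    using assms by (simp add: norm_mult algebra_simps)
  finally show ?thesis
    by (intro power_mono) auto
qed

lemma norm_of_real_minus_mult_imaginary_sq_ge:
  assumes "norm z \<le> \<alpha> * r" "0 \<le> \<alpha>" "\<alpha> < 1" "0 \<le> \<beta>" "\<beta> < 1" "0 < r"
  shows "(r^2 * (1 - \<alpha>))^2 \<le> norm (of_real (r^2) - cnj z * (\<i> * of_real (\<beta> * r)))^2"
proof -
  have "norm (cnj z * (\<i> * of_real (\<beta> * r))) = norm z * (\<beta> * r)"
    using assms by (simp add: norm_mult)
  also have "\<dots> \<le> \<alpha> * r * r"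
    using assms by (intro mult_mono) auto
  finally have "r^2 - \<alpha> * r^2 \<le>
      norm (of_real (r^2) :: complex) - norm (cnj z * (\<i> * of_real (\<beta> * r)))"
    using assms by (simp add: norm_mult power2_eq_square)
  also have "\<dots> \<le> norm (of_real (r^2) - cnj z * (\<i> * of_real (\<beta> * r)))"
    by (rule norm_triangle_ineq2)
  finally show ?thesis
    using assms by (intro power_mono) (auto simp: algebra_simps)
qed

lemma quotient_product_le_1:
  fixes A C k x a b :: real
  assumes "0 \<le> A" "0 < C" "0 < A + k" "0 \<le> a" "0 \<le> b" "0 \<le> x" "a * A \<le> k" "x \<le> b * C"
  shows "A * (C + x) / ((A + k) * C) * ((1 + a) / (1 + b)) \<le> 1"
proof -
  have "(A * (1 + a)) * (C + x) \<le> (A + k) * (C * (1 + b))"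
    using assms by (intro mult_mono) (auto simp: algebra_simps)
  moreover have "(A + k) * (C * (1 + b)) > 0"
    using assms by simp
  ultimately show ?thesis
    by (simp add: divide_le_eq_1 mult_ac)
qed

lemma norm_half_disc_blaschke_sq_mult_Lambda_le_1:
  assumes "r > 0" "0 < \<alpha>" "\<alpha> < 1" "0 < \<beta>" "\<beta> < 1" "0 < \<eta>"
    and z: "z \<in> strip_region (\<alpha> * r) \<eta> Y"
  shows "norm (half_disc_blaschke r z (\<i> * of_real (\<beta> * r)))^2 * Lambda \<alpha> \<beta> \<eta> Y r \<le> 1"
proof -
  from z have z: "norm z \<le> \<alpha> * r" "\<eta> \<le> Im z" "Im z \<le> Y"
    by (auto simp: strip_region_def)
  then have "0 < Y" using assms by linarith
  define A where "A = norm (\<i> * of_real (\<beta> * r) - z)^2"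
  define C where "C = norm (of_real (r^2) - cnj z * (\<i> * of_real (\<beta> * r)))^2"
  define k where "k = 4 * (\<beta> * r) * Im z"
  define a where "a = 4 * \<beta> * \<eta> / (\<alpha> + \<beta>)^2 * (1 / r)"
  define b where "b = 4 * Y / (1 - \<alpha>)^2 * (1 / r)"
  have A: "A \<le> ((\<alpha> + \<beta>) * r)^2"
    unfolding A_def using norm_imaginary_minus_sq_le[OF z(1)] assms by simp
  have C: "(r^2 * (1 - \<alpha>))^2 \<le> C"
    unfolding C_def using norm_of_real_minus_mult_imaginary_sq_ge[OF z(1)] assms by simp
  have "a * A \<le> a * ((\<alpha> + \<beta>) * r)^2"
    using A assms by (intro mult_left_mono) (auto simp: a_def)
  also have "\<dots> = 4 * \<beta> * \<eta> * r"
    using assms by (simp add: a_def power_mult_distrib eval_nat_numeral)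
  also have "\<dots> \<le> k"
    unfolding k_def using z assms by simp
  finally have aA: "a * A \<le> k" .
  have "\<beta> * Im z \<le> Y"
    using mult_left_le_one_le[of "Im z" \<beta>] z assms by linarith
  then have "r^2 * k \<le> 4 * Y * r^3"
    unfolding k_def using assms by (simp add: power2_eq_square power3_eq_cube)
  also have "\<dots> = b * (r^2 * (1 - \<alpha>))^2"
    using assms by (simp add: b_def power_mult_distrib eval_nat_numeral)
  also have "\<dots> \<le> b * C"
    using C assms \<open>0 < Y\<close> by (intro mult_left_mono) (auto simp: b_def)
  finally have kC: "r^2 * k \<le> b * C" .
  have "A * (C + r^2 * k) / ((A + k) * C) * ((1 + a) / (1 + b)) \<le> 1"
  proof (rule quotient_product_le_1[OF _ _ _ _ _ _ aA kC])
    have "0 < (r^2 * (1 - \<alpha>))^2" using assms by simp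
    then show "0 < C" using C by linarith
    have "0 < k" unfolding k_def using z assms by simp
    then show "0 \<le> A" "0 < A + k" "0 \<le> r^2 * k"
      unfolding A_def by (simp_all add: add_nonneg_pos)
    show "0 \<le> a" "0 \<le> b"
      unfolding a_def b_def using assms \<open>0 < Y\<close> by simp_all
  qed
  then show ?thesis
    unfolding norm_half_disc_blaschke_imaginary_sq Lambda_def A_def[symmetric] C_def[symmetric]
      k_def[symmetric] a_def[symmetric] b_def[symmetric]
    by (simp add: mult.assoc)
qed

lemma Lambda_gt_1:
  assumes "r > 0" "0 < \<eta>" "0 \<le> Y" "0 < \<alpha>" "\<alpha> < 1" "0 < \<beta>"
    and "\<beta> * ((1 - \<alpha>) / (\<alpha> + \<beta>))^2 > Y / \<eta>"
  shows "Lambda \<alpha> \<beta> \<eta> Y r > 1"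
proof -
  have pos: "(\<alpha> + \<beta>)^2 > 0" "(1 - \<alpha>)^2 > 0"
    using assms by auto
  have "Y * (\<alpha> + \<beta>)^2 < \<beta> * \<eta> * (1 - \<alpha>)^2"
    using assms(7) pos \<open>0 < \<eta>\<close> by (simp add: power_divide field_simps)
  then have "4 * Y / (1 - \<alpha>)^2 * (1 / r) < 4 * \<beta> * \<eta> / (\<alpha> + \<beta>)^2 * (1 / r)"
    using pos \<open>r > 0\<close> by (simp add: field_simps)
  moreover have "0 \<le> 4 * Y / (1 - \<alpha>)^2 * (1 / r)"
    using calculation assms pos by (simp add: field_simps)
  ultimately show ?thesis
    unfolding Lambda_def by simp
qed

lemma prod_power_sq_mult_power_sum_le_1:
  fixes a :: "'a \<Rightarrow> real" and m :: "'a \<Rightarrow> nat"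
  assumes "\<And>z. z \<in> Z \<Longrightarrow> 0 \<le> a z \<and> a z ^ 2 * L \<le> 1" "0 \<le> L"
  shows "(\<Prod>z\<in>Z. a z ^ m z)^2 * L ^ (\<Sum>z\<in>Z. m z) \<le> 1"
proof -
  have "(\<Prod>z\<in>Z. a z ^ m z)^2 * L ^ (\<Sum>z\<in>Z. m z) = (\<Prod>z\<in>Z. (a z ^ 2 * L) ^ m z)"
    by (simp add: power_sum prod_power_distrib prod.distrib power_mult_distrib power2_eq_square)
  also have "\<dots> \<le> 1"
    using assms by (intro prod_le_1) (simp add: power_le_one)
  finally show ?thesis .
qed

lemma le_ln_div_ln_of_sq_mult_power_le:
  assumes "1 < L" "0 < x" "0 \<le> M" "x^2 * L^n \<le> M^2" "1 \<le> c"
  shows "real n \<le> 2 / ln L * ln (c * (M / x))"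
proof -
  have "0 < x^2 * L^n" using assms by simp
  then have "0 < M^2" using assms(4) by linarith
  then have "0 < M" using assms(3) by (cases "M = 0") simp_all
  have "2 * ln x + n * ln L \<le> 2 * ln M"
    using assms \<open>0 < M\<close> \<open>0 < x^2 * L^n\<close> ln_le_cancel_iff[of "x^2 * L^n" "M^2"]
    by (simp add: ln_mult ln_realpow)
  then have "n * ln L \<le> 2 * ln (M / x)"
    using assms \<open>0 < M\<close> by (simp add: ln_div)
  also have "\<dots> \<le> 2 * ln (c * (M / x))"
  proof -
    have "M / x \<le> c * (M / x)"
      using mult_right_mono[OF assms(5), of "M / x"] assms \<open>0 < M\<close> by simp
    then show ?thesis
      using assms \<open>0 < M\<close> by simp
  qed
  finally show ?thesis
    using assms by (simp add: field_simps)
qed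

lemma analytic_on_connected_obtains_open_connected:
  assumes "f analytic_on S" "connected S"
  obtains T where "open T" "connected T" "S \<subseteq> T" "f holomorphic_on T"
proof (cases "S = {}")
  case True
  then show ?thesis by (intro that[of "{}"]) (auto intro: holomorphic_on_empty)
next
  case False
  then obtain p where "p \<in> S" by blast
  obtain U where U: "open U" "S \<subseteq> U" "f holomorphic_on U"
    using assms(1) analytic_on_holomorphic by blast
  show ?thesis
  proof (rule that[of "connected_component_set U p"])
    show "S \<subseteq> connected_component_set U p"
      using connected_component_maximal[OF \<open>p \<in> S\<close> assms(2) U(2)] .
    show "f holomorphic_on connected_component_set U p"
      using U(3) connected_component_subset by (rule holomorphic_on_subset)
  qed (use U(1) in \<open>auto intro: open_connected_component\<close>)
qed

lemma real_sum_zorder_le_log_bound: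
  fixes f :: "complex \<Rightarrow> complex" and r Y \<eta> \<alpha> \<beta> :: real
  assumes "r > 0" "f analytic_on half_disc r"
    and "0 < \<eta>" "0 < \<alpha>" "\<alpha> < 1" "0 < \<beta>" "\<beta> < 1" "Lambda \<alpha> \<beta> \<eta> Y r > 1"
    and "f (\<i> * of_real (\<beta> * r)) \<noteq> 0"
    and Z: "finite Z" "\<And>z. z \<in> Z \<Longrightarrow> z \<in> strip_region (\<alpha> * r) \<eta> Y \<and> f z = 0"
  shows "real (\<Sum>z\<in>Z. nat (zorder f z))
           \<le> 2 / ln (Lambda \<alpha> \<beta> \<eta> Y r) *
              ln (1 / min \<beta> (1 - \<beta>) *
                  (Sup ((\<lambda>z. norm (f z)) ` frontier (half_disc r)) /
                   norm (f (\<i> * of_real (\<beta> * r)))))"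
proof -
  define p where "p = \<i> * complex_of_real (\<beta> * r)"
  define L where "L = Lambda \<alpha> \<beta> \<eta> Y r"
  define M where "M = Sup ((\<lambda>z. norm (f z)) ` frontier (half_disc r))"
  define B where "B = (\<Prod>z\<in>Z. norm (half_disc_blaschke r z p) ^ nat (zorder f z))"
  have "p \<in> half_disc r"
    unfolding p_def half_disc_def using assms by (simp add: norm_mult)
  have "connected (half_disc r)"
    unfolding half_disc_def by (intro convex_connected convex_Int convex_cball convex_halfspace_Im_ge)
  then obtain T where T: "open T" "connected T" "half_disc r \<subseteq> T" "f holomorphic_on T"
    using analytic_on_connected_obtains_open_connected assms(2) by blast
  have zeros: "f z = 0 \<and> Im z > 0 \<and> norm z < r" if "z \<in> Z" for z
    using Z(2)[OF that] assms by (auto simp: strip_region_def intro: le_less_trans)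
  have fp: "norm (f p) \<le> M * B"
    unfolding M_def B_def
    by (rule norm_le_Sup_frontier_half_disc_mult_prod_blaschke
        [OF T(4,1,2,3) \<open>p \<in> half_disc r\<close> _ Z(1) zeros])
      (use assms(9) p_def in simp)
  define n where "n = (\<Sum>z\<in>Z. nat (zorder f z))"
  have "B^2 * L ^ n \<le> 1"
    unfolding B_def n_def
  proof (rule prod_power_sq_mult_power_sum_le_1)
    fix z assume "z \<in> Z"
    then show "0 \<le> norm (half_disc_blaschke r z p) \<and> norm (half_disc_blaschke r z p)^2 * L \<le> 1"
      unfolding L_def p_def
      using norm_half_disc_blaschke_sq_mult_Lambda_le_1[OF assms(1,4,5,6,7,3)] Z(2)[OF \<open>z \<in> Z\<close>]
      by simp
  qed (use assms(8) L_def in simp)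
  have "0 < norm (f p)"
    using assms(9) p_def by simp
  have "0 \<le> B"
    unfolding B_def by (intro prod_nonneg) auto
  have "0 \<le> M"
    using fp \<open>0 < norm (f p)\<close> \<open>0 \<le> B\<close> by (smt (verit) mult_nonpos_nonneg)
  have "norm (f p)^2 * L ^ n \<le> (M * B)^2 * L ^ n"
    using fp assms(8) L_def by (intro mult_right_mono power_mono) auto
  also have "\<dots> = M^2 * (B^2 * L ^ n)"
    by (simp add: power_mult_distrib)
  also have "\<dots> \<le> M^2"
    using \<open>B^2 * L ^ n \<le> 1\<close> by (simp add: mult_left_le)
  finally have "norm (f p)^2 * L ^ n \<le> M^2" .
  moreover have "1 \<le> 1 / min \<beta> (1 - \<beta>)"
    using assms by simp
  ultimately have "real n \<le> 2 / ln L * ln (1 / min \<beta> (1 - \<beta>) * (M / norm (f p)))"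
    using le_ln_div_ln_of_sq_mult_power_le assms(8) \<open>0 < norm (f p)\<close> \<open>0 \<le> M\<close>
    unfolding L_def by blast
  then show ?thesis
    unfolding n_def L_def M_def p_def .
qed

theorem mainTheorem8:
  fixes f :: "complex \<Rightarrow> complex" and r Y \<eta> \<alpha> \<beta> :: real
  assumes "r > 0"
    and "f analytic_on half_disc r"
    and "0 < \<eta>" and "\<eta> < Y" and "Y < r"
    and "0 < \<alpha>" and "\<alpha> < 1" and "0 < \<beta>" and "\<beta> < 1"
    and "\<beta> * ((1 - \<alpha>) / (\<alpha> + \<beta>))^2 > Y / \<eta>"
    and "f (\<i> * of_real (\<beta> * r)) \<noteq> 0"
  shows "real_of_int (zero_count f (strip_region (\<alpha> * r) \<eta> Y))
           \<le> 2 / ln (Lambda \<alpha> \<beta> \<eta> Y r) *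
              ln (1 / min \<beta> (1 - \<beta>) *
                  (Sup ((\<lambda>z. norm (f z)) ` frontier (half_disc r)) /
                   norm (f (\<i> * of_real (\<beta> * r)))))
       \<and> Lambda \<alpha> \<beta> \<eta> Y r > 1"
proof
  show L: "Lambda \<alpha> \<beta> \<eta> Y r > 1"
    using assms by (intro Lambda_gt_1) auto
  define Zs where "Zs = {z \<in> strip_region (\<alpha> * r) \<eta> Y. f z = 0}"
  \<comment> \<open>If Zs were infinite, zero_count would be 0 by convention; the bound for Z = {} covers that.\<close>
  define Z where "Z = (if finite Zs then Zs else {})"
  have "real_of_int (zero_count f (strip_region (\<alpha> * r) \<eta> Y)) \<le> real (\<Sum>z\<in>Z. nat (zorder f z))"
    unfolding zero_count_def Zs_def[symmetric] Z_def by (auto intro: sum_mono)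
  also have "\<dots> \<le> 2 / ln (Lambda \<alpha> \<beta> \<eta> Y r) *
                ln (1 / min \<beta> (1 - \<beta>) *
                  (Sup ((\<lambda>z. norm (f z)) ` frontier (half_disc r)) /
                   norm (f (\<i> * of_real (\<beta> * r)))))"
    using assms L by (intro real_sum_zorder_le_log_bound) (auto simp: Z_def Zs_def split: if_splits)
  finally show "real_of_int (zero_count f (strip_region (\<alpha> * r) \<eta> Y)) \<le> \<dots>" .
qed

end
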